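(* Let $(P,\le,A_1\ldots A_k)$ be a regular poset of width $w$, let $(u,s)$ be any characteristics, and let $\mathcal{L}$ be a chain in $(\mathcal{P}(u,s),\le_{(u,s)})$. Then the edge poset $(\mathcal{L}_E,\le_E)$ has width at most $w^3$ and is $(\underline{2w-2\lceil\sqrt{w}\rceil+3}+\underline{2w-2\lceil\sqrt{w}\rceil+3})$-free.
   Context: Let $(P,\le)$ be a finite poset of width $w$. For $A\subseteq P$ let $A{\uparrow}=\{y: x\le y\text{ for some }x\in A\}$, $A{\downarrow}=\{y: y\le x\text{ for some }x\in A\}$. For maximal antichains $A,B$ write $A\sqsubseteq B$ if $A\subseteq B{\downarrow}$, and $A\sqsubset B$ if also $A\ne B$. For disjoint antichains $A\sqsubset B$, $(A,B,<)$ is the bipartite graph with classes $A,B$ and edges $(a<b)$ for $a\in A,b\in B$, $a<b$; it is regular if every edge lies in a perfect matching. A regular poset $(P,\le,A_1\ldots A_k)$: $A_1,\dots,A_k$ are maximum antichains partitioning $P$, $(\{A_1,\dots,A_k\},\sqsubseteq)$ is a linear order with minimum $A_1$ and maximum $A_2$, $a<b$ for all $a\in A_1,b\in A_2$, and for every $t\in[2,k]$ and every $A_p\sqsubset A_s$ consecutive in $(\{A_1,\dots,A_t\},\sqsubseteq)$ the graph $(A_p,A_s,<)$ is regular. A node is a bipartite graph $N=(X,Y,<)$ where, for some such consecutive pair $A_p\sqsubset A_s$ (at some stage $t$), $X\subseteq A_p$, $Y\subseteq A_s$ and $X\cup Y$ is the vertex set of a connected component of $(A_p,A_s,<)$. Its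 width is $|X|=|Y|$, $\mathrm{Int}(N)=X{\uparrow}\cap Y{\downarrow}$, and its surplus is the largest $k$ such that $|A{\uparrow}\cap Y|\ge\min\{|A|+k,|Y|\}$ for all non-empty $A\subseteq X$ ($\infty$ if $N$ is complete bipartite); its characteristics is the pair (width, surplus). Node tree: the set of all nodes, where when for $t\ge3$ the antichain $A_t$ is inserted between $A_p\sqsubset A_s$ consecutive at stage $t-1$, each node $M$ of $(A_p,A_t,<)$ or $(A_t,A_s,<)$ is a child of the unique node $N$ of $(A_p,A_s,<)$ with $\mathrm{Int}(M)\subset\mathrm{Int}(N)$; it is a rooted tree with root $(A_1,A_2,<)$. A Dilworth clique of width $m$ in a node $(X,Y,<)$ is a set $\{x_1,\dots,x_m,y_1,\dots,y_m\}$ with $x_i\in X$, $y_i\in Y$, $x_i<y_j$ for all $i,j\in[m]$, such that the edges $x_1<y_1,\dots,x_m<y_m$ extend to a perfect matching of $(X,Y,<)$. A node is active if it contains a Dilworth clique of width $\lceil\sqrt{w}\rceil$ and no proper ancestor of it has the same characteristics. For each active node $N$ fix a Dilworth clique $R(N)$ of width $\lceil\sqrt w\rceil$ in $N$. $\mathcal{P}(u,s)$ is the set of active nodes with characteristics $(u,s)$; for $N,K\in\mathcal{P}(u,s)$, $N<_{(u,s)}K$ iff some maximal element $x$ of $(R(N),\le)$ and some minimal element $y$ of $(R(K),\le)$ satisfy $x\le y$. For a set $\mathcal{F}$ of nodes, $\mathcal{F}_E$ is the set of all edges $(a<b)$ of nodes in $\mathcal{F}$, and the edge poset $(\mathcal{F}_E,\le_E)$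 is the partial order in which for distinct edges $(a<b)<_E(c<d)$ iff $b\le c$. For $m\in\mathbb{N}$, a poset is $(\underline{m}+\underline{m})$-free if it has no induced subposet isomorphic to the disjoint union of two $m$-element chains with every element of one chain incomparable to every element of the other. *)

theory Defs
  imports Complex_Main "HOL-Library.Extended_Nat"
begin

definition poset_on :: "'a set \<Rightarrow> ('a \<Rightarrow> 'a \<Rightarrow> bool) \<Rightarrow> bool" where
  "poset_on P le \<longleftrightarrow> finite P \<and> (\<forall>x\<in>P. le x x)
     \<and> (\<forall>x\<in>P. \<forall>y\<in>P. le x y \<and> le y x \<longrightarrow> x = y)
     \<and> (\<forall>x\<in>P. \<forall>y\<in>P. \<forall>z\<in>P. le x y \<and> le y z \<longrightarrow> le x z)"

definition lt_of :: "('a \<Rightarrow> 'a \<Rightarrow> bool) \<Rightarrow> 'a \<Rightarrow> 'a \<Rightarrow> bool" where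
  "lt_of le x y \<longleftrightarrow> le x y \<and> x \<noteq> y"

definition antichain_in :: "'a set \<Rightarrow> ('a \<Rightarrow> 'a \<Rightarrow> bool) \<Rightarrow> 'a set \<Rightarrow> bool" where
  "antichain_in P le B \<longleftrightarrow> B \<subseteq> P \<and> (\<forall>x\<in>B. \<forall>y\<in>B. le x y \<longrightarrow> x = y)"

definition width_of :: "'a set \<Rightarrow> ('a \<Rightarrow> 'a \<Rightarrow> bool) \<Rightarrow> nat" where
  "width_of P le = Max {card B | B. antichain_in P le B}"

definition maximum_antichain :: "'a set \<Rightarrow> ('a \<Rightarrow> 'a \<Rightarrow> bool) \<Rightarrow> 'a set \<Rightarrow> bool" where
  "maximum_antichain P le B \<longleftrightarrow> antichain_in P le B \<and> card B = width_of P le"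

definition up_set :: "'a set \<Rightarrow> ('a \<Rightarrow> 'a \<Rightarrow> bool) \<Rightarrow> 'a set \<Rightarrow> 'a set" where
  "up_set P le B = {y\<in>P. \<exists>x\<in>B. le x y}"

definition down_set :: "'a set \<Rightarrow> ('a \<Rightarrow> 'a \<Rightarrow> bool) \<Rightarrow> 'a set \<Rightarrow> 'a set" where
  "down_set P le B = {y\<in>P. \<exists>x\<in>B. le y x}"

definition sq_le :: "'a set \<Rightarrow> ('a \<Rightarrow> 'a \<Rightarrow> bool) \<Rightarrow> 'a set \<Rightarrow> 'a set \<Rightarrow> bool" where
  "sq_le P le B C \<longleftrightarrow> B \<subseteq> down_set P le C"

definition sq_lt :: "'a set \<Rightarrow> ('a \<Rightarrow> 'a \<Rightarrow> bool) \<Rightarrow> 'a set \<Rightarrow> 'a set \<Rightarrow> bool" where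
  "sq_lt P le B C \<longleftrightarrow> sq_le P le B C \<and> B \<noteq> C"

definition perfect_matching :: "('a \<Rightarrow> 'a \<Rightarrow> bool) \<Rightarrow> 'a set \<Rightarrow> 'a set \<Rightarrow> ('a \<Rightarrow> 'a) \<Rightarrow> bool" where
  "perfect_matching le X Y f \<longleftrightarrow> bij_betw f X Y \<and> (\<forall>x\<in>X. lt_of le x (f x))"

definition regular_bip :: "('a \<Rightarrow> 'a \<Rightarrow> bool) \<Rightarrow> 'a set \<Rightarrow> 'a set \<Rightarrow> bool" where
  "regular_bip le X Y \<longleftrightarrow>
     (\<forall>a\<in>X. \<forall>b\<in>Y. lt_of le a b \<longrightarrow> (\<exists>f. perfect_matching le X Y f \<and> f a = b))"

definition bip_adj :: "('a \<Rightarrow> 'a \<Rightarrow> bool) \<Rightarrow> 'a set \<Rightarrow> 'a set \<Rightarrow> 'a \<Rightarrow> 'a \<Rightarrow> bool" where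
  "bip_adj le X Y u v \<longleftrightarrow> (u \<in> X \<and> v \<in> Y \<and> lt_of le u v) \<or> (v \<in> X \<and> u \<in> Y \<and> lt_of le v u)"

definition component_of :: "('a \<Rightarrow> 'a \<Rightarrow> bool) \<Rightarrow> 'a set \<Rightarrow> 'a set \<Rightarrow> 'a set \<Rightarrow> bool" where
  "component_of le X Y C \<longleftrightarrow> (\<exists>u\<in>X \<union> Y. C = {v. (bip_adj le X Y)\<^sup>*\<^sup>* u v})"

definition consec :: "'a set \<Rightarrow> ('a \<Rightarrow> 'a \<Rightarrow> bool) \<Rightarrow> (nat \<Rightarrow> 'a set) \<Rightarrow> nat \<Rightarrow> nat \<Rightarrow> nat \<Rightarrow> bool" where
  "consec P le A t p s \<longleftrightarrow> p \<in> {1..t} \<and> s \<in> {1..t} \<and> sq_lt P le (A p) (A s)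
     \<and> \<not> (\<exists>q\<in>{1..t}. sq_lt P le (A p) (A q) \<and> sq_lt P le (A q) (A s))"

definition regular_poset :: "'a set \<Rightarrow> ('a \<Rightarrow> 'a \<Rightarrow> bool) \<Rightarrow> (nat \<Rightarrow> 'a set) \<Rightarrow> nat \<Rightarrow> bool" where
  "regular_poset P le A k \<longleftrightarrow> poset_on P le \<and> 2 \<le> k
     \<and> (\<forall>i\<in>{1..k}. maximum_antichain P le (A i))
     \<and> (\<forall>i\<in>{1..k}. A i \<noteq> {})
     \<and> (\<forall>i\<in>{1..k}. \<forall>j\<in>{1..k}. i \<noteq> j \<longrightarrow> A i \<inter> A j = {})
     \<and> (\<Union>i\<in>{1..k}. A i) = P
     \<and> (\<forall>i\<in>{1..k}. \<forall>j\<in>{1..k}. sq_le P le (A i) (A j) \<or> sq_le P le (A j) (A i))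
     \<and> (\<forall>i\<in>{1..k}. sq_le P le (A 1) (A i) \<and> sq_le P le (A i) (A 2))
     \<and> (\<forall>a\<in>A 1. \<forall>b\<in>A 2. lt_of le a b)
     \<and> (\<forall>t\<in>{2..k}. \<forall>p s. consec P le A t p s \<longrightarrow> regular_bip le (A p) (A s))"

definition node_of :: "('a \<Rightarrow> 'a \<Rightarrow> bool) \<Rightarrow> 'a set \<Rightarrow> 'a set \<Rightarrow> 'a set \<times> 'a set \<Rightarrow> bool" where
  "node_of le Ap As N \<longleftrightarrow> fst N \<subseteq> Ap \<and> snd N \<subseteq> As \<and> component_of le Ap As (fst N \<union> snd N)"

definition is_node :: "'a set \<Rightarrow> ('a \<Rightarrow> 'a \<Rightarrow> bool) \<Rightarrow> (nat \<Rightarrow> 'a set) \<Rightarrow> nat \<Rightarrow> 'a set \<times> 'a set \<Rightarrow> bool" where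
  "is_node P le A k N \<longleftrightarrow>
     (\<exists>t\<in>{2..k}. \<exists>p s. consec P le A t p s \<and> node_of le (A p) (A s) N)"

definition Int_node :: "'a set \<Rightarrow> ('a \<Rightarrow> 'a \<Rightarrow> bool) \<Rightarrow> 'a set \<times> 'a set \<Rightarrow> 'a set" where
  "Int_node P le N = up_set P le (fst N) \<inter> down_set P le (snd N)"

definition node_child :: "'a set \<Rightarrow> ('a \<Rightarrow> 'a \<Rightarrow> bool) \<Rightarrow> (nat \<Rightarrow> 'a set) \<Rightarrow> nat
     \<Rightarrow> 'a set \<times> 'a set \<Rightarrow> 'a set \<times> 'a set \<Rightarrow> bool" where
  "node_child P le A k M N \<longleftrightarrow>
     (\<exists>t\<in>{3..k}. \<exists>p s. consec P le A (t - 1) p s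
        \<and> sq_lt P le (A p) (A t) \<and> sq_lt P le (A t) (A s)
        \<and> (node_of le (A p) (A t) M \<or> node_of le (A t) (A s) M)
        \<and> node_of le (A p) (A s) N
        \<and> Int_node P le M \<subset> Int_node P le N)"

definition proper_ancestor :: "'a set \<Rightarrow> ('a \<Rightarrow> 'a \<Rightarrow> bool) \<Rightarrow> (nat \<Rightarrow> 'a set) \<Rightarrow> nat
     \<Rightarrow> 'a set \<times> 'a set \<Rightarrow> 'a set \<times> 'a set \<Rightarrow> bool" where
  "proper_ancestor P le A k K N \<longleftrightarrow> (node_child P le A k)\<^sup>+\<^sup>+ N K"

definition surplus :: "('a \<Rightarrow> 'a \<Rightarrow> bool) \<Rightarrow> 'a set \<times> 'a set \<Rightarrow> enat" where
  "surplus le N =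
     (if (\<forall>x\<in>fst N. \<forall>y\<in>snd N. lt_of le x y) then \<infinity>
      else enat (GREATEST m. \<forall>B. B \<subseteq> fst N \<and> B \<noteq> {} \<longrightarrow>
          card {y\<in>snd N. \<exists>x\<in>B. le x y} \<ge> min (card B + m) (card (snd N))))"

definition characteristics :: "('a \<Rightarrow> 'a \<Rightarrow> bool) \<Rightarrow> 'a set \<times> 'a set \<Rightarrow> nat \<times> enat" where
  "characteristics le N = (card (fst N), surplus le N)"

definition dilworth_clique :: "('a \<Rightarrow> 'a \<Rightarrow> bool) \<Rightarrow> 'a set \<times> 'a set \<Rightarrow> nat \<Rightarrow> 'a set \<Rightarrow> bool" where
  "dilworth_clique le N m C \<longleftrightarrow>
     (\<exists>xs ys f. C = xs ` {..<m} \<union> ys ` {..<m}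
        \<and> (\<forall>i<m. xs i \<in> fst N \<and> ys i \<in> snd N)
        \<and> (\<forall>i<m. \<forall>j<m. lt_of le (xs i) (ys j))
        \<and> inj_on xs {..<m}
        \<and> perfect_matching le (fst N) (snd N) f \<and> (\<forall>i<m. f (xs i) = ys i))"

definition clique_width :: "nat \<Rightarrow> nat" where
  "clique_width w = nat \<lceil>sqrt (real w)\<rceil>"

definition active :: "'a set \<Rightarrow> ('a \<Rightarrow> 'a \<Rightarrow> bool) \<Rightarrow> (nat \<Rightarrow> 'a set) \<Rightarrow> nat \<Rightarrow> 'a set \<times> 'a set \<Rightarrow> bool" where
  "active P le A k N \<longleftrightarrow> is_node P le A k N
     \<and> (\<exists>C. dilworth_clique le N (clique_width (width_of P le)) C)
     \<and> \<not> (\<exists>K. proper_ancestor P le A k K N \<and> characteristics le K = characteristics le N)"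

definition active_class :: "'a set \<Rightarrow> ('a \<Rightarrow> 'a \<Rightarrow> bool) \<Rightarrow> (nat \<Rightarrow> 'a set) \<Rightarrow> nat
     \<Rightarrow> nat \<times> enat \<Rightarrow> ('a set \<times> 'a set) set" where
  "active_class P le A k us = {N. active P le A k N \<and> characteristics le N = us}"

definition class_less :: "('a \<Rightarrow> 'a \<Rightarrow> bool) \<Rightarrow> ('a set \<times> 'a set \<Rightarrow> 'a set)
     \<Rightarrow> 'a set \<times> 'a set \<Rightarrow> 'a set \<times> 'a set \<Rightarrow> bool" where
  "class_less le R N K \<longleftrightarrow>
     (\<exists>x y. x \<in> R N \<and> \<not> (\<exists>z\<in>R N. lt_of le x z)
          \<and> y \<in> R K \<and> \<not> (\<exists>z\<in>R K. lt_of le z y) \<and> le x y)"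

definition chain_of :: "'b set \<Rightarrow> ('b \<Rightarrow> 'b \<Rightarrow> bool) \<Rightarrow> 'b set \<Rightarrow> bool" where
  "chain_of S r L \<longleftrightarrow> L \<subseteq> S \<and> (\<forall>x\<in>L. \<forall>y\<in>L. x \<noteq> y \<longrightarrow> r x y \<or> r y x)"

definition edges_of :: "('a \<Rightarrow> 'a \<Rightarrow> bool) \<Rightarrow> ('a set \<times> 'a set) set \<Rightarrow> ('a \<times> 'a) set" where
  "edges_of le F = {(a, b). \<exists>N\<in>F. a \<in> fst N \<and> b \<in> snd N \<and> lt_of le a b}"

definition edge_le :: "('a \<Rightarrow> 'a \<Rightarrow> bool) \<Rightarrow> 'a \<times> 'a \<Rightarrow> 'a \<times> 'a \<Rightarrow> bool" where
  "edge_le le e f \<longleftrightarrow> e = f \<or> le (snd e) (fst f)"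

definition mm_free :: "'b set \<Rightarrow> ('b \<Rightarrow> 'b \<Rightarrow> bool) \<Rightarrow> nat \<Rightarrow> bool" where
  "mm_free S r m \<longleftrightarrow> \<not> (\<exists>C1 C2. C1 \<subseteq> S \<and> C2 \<subseteq> S \<and> finite C1 \<and> finite C2
      \<and> card C1 = m \<and> card C2 = m \<and> C1 \<inter> C2 = {}
      \<and> (\<forall>x\<in>C1. \<forall>y\<in>C1. r x y \<or> r y x)
      \<and> (\<forall>x\<in>C2. \<forall>y\<in>C2. r x y \<or> r y x)
      \<and> (\<forall>x\<in>C1. \<forall>y\<in>C2. \<not> r x y \<and> \<not> r y x))"

end

theory Submission
  imports Defs
begin

text \<open>Every node of the chain is a component of the bipartite graph between two consecutive
  levels \<open>A\<^sub>p \<sqsubset> A\<^sub>s\<close>. For an up-set \<open>U\<close> Hall's condition gives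
  \<open>|U \<inter> A\<^sub>p| \<le> |U \<inter> A\<^sub>s|\<close>, and regularity makes this strict whenever \<open>U\<close> splits the node.
  Along the chain the levels move upwards, so the upper count of a node bounds the lower count
  of every later node: the nodes split by one up-set have pairwise distinct lower counts, and
  there are at most as many of them as there are possible values.

  For an antichain of edges, the up-set of the heads splits every host node, so there are at
  most \<open>w\<close> hosts, each with at most \<open>w\<^sup>2\<close> edges. For two incomparable chains of edges, let \<open>M\<close>
  be the earliest node hosting one chain whose Dilworth clique is reached by the heads of that
  chain, say of the second. Each host of the first chain is either one whose clique its own
  heads miss (at most \<open>w - \<lceil>\<surd>w\<rceil> + 1\<close> nodes, as the clique occupies \<open>\<lceil>\<surd>w\<rceil>\<close> places), or \<open>M\<close>,
  or a later node split by the heads of the second chain, which there already fill \<open>\<lceil>\<surd>w\<rceil>\<close>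
  places (at most \<open>w - \<lceil>\<surd>w\<rceil>\<close> nodes). Distinct edges of a chain have distinct hosts, so the
  first chain has at most \<open>2w - 2\<lceil>\<surd>w\<rceil> + 2\<close> edges.\<close>

section \<open>Antichains and up-sets\<close>

lemma finite_antichain_cards: "finite S \<Longrightarrow> finite {card B |B. antichain_in S r B}"
  by (rule finite_subset[of _ "card ` Pow S"]) (auto simp: antichain_in_def)

lemma antichain_card_le_width: "finite S \<Longrightarrow> antichain_in S r B \<Longrightarrow> card B \<le> width_of S r"
  unfolding width_of_def using finite_antichain_cards by (blast intro: Max_ge)

lemma width_of_le:
  assumes "finite S" and "\<And>B. antichain_in S r B \<Longrightarrow> card B \<le> n"
  shows "width_of S r \<le> n"
proof -
  have "antichain_in S r {}"
    by (simp add: antichain_in_def)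
  then show ?thesis
    unfolding width_of_def using finite_antichain_cards[OF assms(1)] assms(2)
    by (subst Max_le_iff) auto
qed

lemma subset_up_set: "poset_on P le \<Longrightarrow> T \<subseteq> P \<Longrightarrow> T \<subseteq> up_set P le T"
  unfolding poset_on_def up_set_def by blast

lemma up_set_up_set_subset:
  "poset_on P le \<Longrightarrow> T \<subseteq> P \<Longrightarrow> up_set P le (up_set P le T \<inter> X) \<subseteq> up_set P le T"
  unfolding poset_on_def up_set_def by blast

lemma up_set_upward_closed:
  "poset_on P le \<Longrightarrow> T \<subseteq> P \<Longrightarrow> y \<in> up_set P le T \<Longrightarrow> x \<in> P \<Longrightarrow> le y x
    \<Longrightarrow> x \<in> up_set P le T"
  unfolding poset_on_def up_set_def by blast

lemma sq_le_reverse_eq: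
  assumes po: "poset_on P le" and B: "antichain_in P le B" and C: "C \<subseteq> P"
    and CB: "sq_le P le C B" and x: "x \<in> C" and y: "y \<in> B" and yx: "le y x"
  shows "x = y"
proof -
  obtain z where z: "z \<in> B" "le x z"
    using CB x unfolding sq_le_def down_set_def by blast
  have P: "x \<in> P" "y \<in> P" "z \<in> P"
    using B C x y z unfolding antichain_in_def by auto
  then have "le y z"
    using po yx z unfolding poset_on_def by blast
  then have "y = z"
    using B y z unfolding antichain_in_def by blast
  then show ?thesis
    using po P yx z unfolding poset_on_def by blast
qed

lemma antichain_Un_not_above:
  assumes po: "poset_on P le" and S: "antichain_in P le S" and B: "antichain_in P le B"
    and SB: "sq_le P le S B"
  shows "antichain_in P le (S \<union> (B - up_set P le S))"
  unfolding antichain_in_def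
proof (intro conjI ballI impI)
  show "S \<union> (B - up_set P le S) \<subseteq> P"
    using S B unfolding antichain_in_def by blast
next
  fix x y
  assume x: "x \<in> S \<union> (B - up_set P le S)" and y: "y \<in> S \<union> (B - up_set P le S)" and xy: "le x y"
  have SP: "S \<subseteq> P" and BP: "B \<subseteq> P"
    using S B unfolding antichain_in_def by auto
  consider "x \<in> S" "y \<in> S" | "x \<in> S" "y \<in> B - up_set P le S"
    | "x \<in> B - up_set P le S" "y \<in> S" | "x \<in> B" "y \<in> B"
    using x y by blast
  then show "x = y"
  proof cases
    case 1
    then show ?thesis using S xy unfolding antichain_in_def by blast
  next
    case 2
    then show ?thesis using xy BP unfolding up_set_def by blast
  next
    case 3
    then have "y = x"
      using sq_le_reverse_eq[OF po B SP SB] xy by blast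
    then show ?thesis
      using 3 subset_up_set[OF po SP] by blast
  next
    case 4
    then show ?thesis using B xy unfolding antichain_in_def by blast
  qed
qed

text \<open>Otherwise replacing the upper bounds of \<open>S\<close> in \<open>B\<close> by \<open>S\<close> itself would give an antichain
  larger than \<open>B\<close>.\<close>
lemma card_le_card_up_set_inter:
  assumes po: "poset_on P le" and S: "antichain_in P le S" and B: "maximum_antichain P le B"
    and SB: "sq_le P le S B"
  shows "card S \<le> card (up_set P le S \<inter> B)"
proof -
  let ?U = "up_set P le S"
  have finP: "finite P" using po unfolding poset_on_def by simp
  have B': "antichain_in P le B" and cardB: "card B = width_of P le"
    using B unfolding maximum_antichain_def by auto
  have SP: "S \<subseteq> P" and BP: "B \<subseteq> P"
    using S B' unfolding antichain_in_def by auto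
  have finS: "finite S" and finB: "finite B"
    using SP BP finP finite_subset by auto
  have "card (S \<union> (B - ?U)) \<le> card B"
    using antichain_card_le_width[OF finP antichain_Un_not_above[OF po S B' SB]] cardB by simp
  moreover have "card (S \<union> (B - ?U)) = card S + card (B - ?U)"
    using subset_up_set[OF po SP] finS finB by (subst card_Un_disjoint) auto
  moreover have "card B = card (?U \<inter> B) + card (B - ?U)"
    using card_Int_Diff[OF finB, of ?U] by (simp add: Int_commute)
  ultimately show ?thesis by simp
qed

section \<open>Regular bipartite graphs\<close>

lemma perfect_matching_image_subset_up_set:
  assumes "perfect_matching le X Y f" and "V \<subseteq> X" and "Y \<subseteq> P"
  shows "f ` V \<subseteq> up_set P le V \<inter> Y"
  using assms unfolding perfect_matching_def bij_betw_def lt_of_def up_set_def by blast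

text \<open>If the neighbourhood of \<open>V\<close> were no larger than \<open>V\<close>, every perfect matching would map \<open>V\<close>
  onto it; as every edge lies in a perfect matching, no edge could then leave \<open>V \<union> N(V)\<close>,
  contradicting the path from \<open>v\<close> to \<open>x\<close>.\<close>
lemma regular_bip_card_up_set_inter_gt:
  assumes finY: "finite Y" and XY: "X \<inter> Y = {}" and YP: "Y \<subseteq> P"
    and reg: "regular_bip le X Y" and f: "perfect_matching le X Y f"
    and VX: "V \<subseteq> X" and v: "v \<in> V" and x: "x \<in> X" "x \<notin> V"
    and path: "(bip_adj le X Y)\<^sup>*\<^sup>* v x"
  shows "card V < card (up_set P le V \<inter> Y)"
proof (rule ccontr)
  let ?U = "up_set P le V \<inter> Y"
  assume "\<not> card V < card ?U"
  then have small: "card ?U \<le> card V" by simp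
  have onto: "g ` V = ?U" if g: "perfect_matching le X Y g" for g
  proof -
    have "card (g ` V) = card V"
      using g VX unfolding perfect_matching_def bij_betw_def by (meson card_image inj_on_subset)
    then show ?thesis
      using small perfect_matching_image_subset_up_set[OF g VX YP] finY
      by (metis card_seteq finite_Int)
  qed
  have closed: "b \<in> V \<union> ?U" if ab: "bip_adj le X Y a b" and a: "a \<in> V \<union> ?U" for a b
  proof -
    from ab consider "a \<in> X" "b \<in> Y" "lt_of le a b" | "b \<in> X" "a \<in> Y" "lt_of le b a"
      unfolding bip_adj_def by blast
    then show ?thesis
    proof cases
      case 1
      then have "a \<in> V" using a XY by blast
      then show ?thesis using 1 YP unfolding up_set_def lt_of_def by blast
    next
      case 2
      obtain g where g: "perfect_matching le X Y g" "g b = a"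
        using reg 2 unfolding regular_bip_def by blast
      have "a \<in> g ` V" using a 2 XY VX onto[OF g(1)] by blast
      then obtain b' where "b' \<in> V" "g b' = g b"
        using g(2) by auto
      moreover have "inj_on g X"
        using g(1) unfolding perfect_matching_def bij_betw_def by simp
      ultimately show ?thesis
        using 2 VX by (metis inj_onD subsetD UnI1)
    qed
  qed
  have "x \<in> V \<union> ?U"
    using path by induction (use v closed in blast)+
  then show False
    using x XY by blast
qed

lemma node_connected:
  assumes "node_of le X Y N" and "z \<in> fst N \<union> snd N" and "z' \<in> fst N \<union> snd N"
  shows "(bip_adj le X Y)\<^sup>*\<^sup>* z z'"
proof -
  have sym: "symp (bip_adj le X Y)\<^sup>*\<^sup>*"
    by (rule symp_rtranclp) (auto simp: symp_def bip_adj_def)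
  obtain u where u: "fst N \<union> snd N = {v. (bip_adj le X Y)\<^sup>*\<^sup>* u v}"
    using assms(1) unfolding node_of_def component_of_def by blast
  then show ?thesis
    using assms(2,3) sym by (metis (no_types, lifting) mem_Collect_eq rtranclp_trans sympD)
qed

lemma node_closed:
  assumes "node_of le X Y N" and "z \<in> fst N \<union> snd N" and "bip_adj le X Y z z'"
  shows "z' \<in> fst N \<union> snd N"
proof -
  obtain u where u: "fst N \<union> snd N = {v. (bip_adj le X Y)\<^sup>*\<^sup>* u v}"
    using assms(1) unfolding node_of_def component_of_def by blast
  then show ?thesis
    using assms(2,3) by (simp add: rtranclp.rtrancl_into_rtrancl)
qed

section \<open>Levels of a regular poset\<close>

locale reg_poset =
  fixes P :: "'a set" and le :: "'a \<Rightarrow> 'a \<Rightarrow> bool" and A :: "nat \<Rightarrow> 'a set" and k w :: nat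
  assumes regular: "regular_poset P le A k" and width: "w = width_of P le"
begin

lemma poset: "poset_on P le"
  using regular unfolding regular_poset_def by simp

lemma finite_P: "finite P"
  using poset unfolding poset_on_def by simp

lemma P_trans: "x \<in> P \<Longrightarrow> y \<in> P \<Longrightarrow> z \<in> P \<Longrightarrow> le x y \<Longrightarrow> le y z \<Longrightarrow> le x z"
  using poset unfolding poset_on_def by blast

lemma level_maximum: "i \<in> {1..k} \<Longrightarrow> maximum_antichain P le (A i)"
  using regular unfolding regular_poset_def by blast

lemma level_antichain: "i \<in> {1..k} \<Longrightarrow> antichain_in P le (A i)"
  using level_maximum unfolding maximum_antichain_def by blast

lemma level_card: "i \<in> {1..k} \<Longrightarrow> card (A i) = w"
  using level_maximum unfolding maximum_antichain_def width by blast

lemma level_subset: "i \<in> {1..k} \<Longrightarrow> A i \<subseteq> P"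
  using level_antichain unfolding antichain_in_def by blast

lemma level_finite: "i \<in> {1..k} \<Longrightarrow> finite (A i)"
  using level_subset finite_P finite_subset by blast

lemma levels_disjoint: "i \<in> {1..k} \<Longrightarrow> j \<in> {1..k} \<Longrightarrow> i \<noteq> j \<Longrightarrow> A i \<inter> A j = {}"
  using regular unfolding regular_poset_def by blast

lemma levels_linear:
  "i \<in> {1..k} \<Longrightarrow> j \<in> {1..k} \<Longrightarrow> sq_le P le (A i) (A j) \<or> sq_le P le (A j) (A i)"
  using regular unfolding regular_poset_def by blast

lemma width_pos: "1 \<le> w"
proof -
  have "1 \<in> {1..k}" and "A 1 \<noteq> {}"
    using regular unfolding regular_poset_def by auto
  then show ?thesis
    using level_card level_finite by (metis One_nat_def Suc_leI card_gt_0_iff)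
qed

lemma sq_le_refl: "B \<subseteq> P \<Longrightarrow> sq_le P le B B"
  using poset unfolding poset_on_def sq_le_def down_set_def by blast

lemma sq_le_trans: "sq_le P le B C \<Longrightarrow> sq_le P le C D \<Longrightarrow> D \<subseteq> P \<Longrightarrow> sq_le P le B D"
  unfolding sq_le_def down_set_def using P_trans by blast

lemma level_reverse_eq:
  "i \<in> {1..k} \<Longrightarrow> j \<in> {1..k} \<Longrightarrow> sq_le P le (A i) (A j) \<Longrightarrow> x \<in> A i \<Longrightarrow> y \<in> A j
    \<Longrightarrow> le y x \<Longrightarrow> x = y"
  using sq_le_reverse_eq[OF poset level_antichain level_subset] by blast

lemma levels_sq_le_antisym:
  assumes "i \<in> {1..k}" and "j \<in> {1..k}"
    and "sq_le P le (A i) (A j)" and "sq_le P le (A j) (A i)"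
  shows "A i = A j"
proof -
  have "A i \<subseteq> A j" if levels: "i \<in> {1..k}" "j \<in> {1..k}"
    and ij: "sq_le P le (A i) (A j)" and ji: "sq_le P le (A j) (A i)" for i j
  proof
    fix x assume x: "x \<in> A i"
    then obtain y where "y \<in> A j" "le x y"
      using ij unfolding sq_le_def down_set_def by blast
    then show "x \<in> A j"
      using level_reverse_eq[OF levels(2,1) ji] x by metis
  qed
  then show ?thesis
    using assms by blast
qed

lemma card_le_card_up_level:
  assumes "i \<in> {1..k}" and "j \<in> {1..k}" and "sq_le P le (A i) (A j)" and "S \<subseteq> A i"
  shows "card S \<le> card (up_set P le S \<inter> A j)"
proof (rule card_le_card_up_set_inter[OF poset _ level_maximum[OF assms(2)]])
  show "antichain_in P le S"
    using level_antichain[OF assms(1)] assms(4) unfolding antichain_in_def by blast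
  show "sq_le P le S (A j)"
    using assms(3,4) unfolding sq_le_def by blast
qed

definition regular_step :: "nat \<Rightarrow> nat \<Rightarrow> bool" where
  "regular_step p s \<longleftrightarrow> p \<in> {1..k} \<and> s \<in> {1..k} \<and> sq_lt P le (A p) (A s)
     \<and> regular_bip le (A p) (A s)"

lemma regular_step_levels: "regular_step p s \<Longrightarrow> p \<in> {1..k} \<and> s \<in> {1..k}"
  unfolding regular_step_def by blast

lemma regular_step_sq_le: "regular_step p s \<Longrightarrow> sq_le P le (A p) (A s)"
  unfolding regular_step_def sq_lt_def by blast

lemma regular_step_neq: "regular_step p s \<Longrightarrow> A p \<noteq> A s"
  unfolding regular_step_def sq_lt_def by blast

lemma regular_step_regular_bip: "regular_step p s \<Longrightarrow> regular_bip le (A p) (A s)"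
  unfolding regular_step_def by blast

lemma regular_step_disjoint: "regular_step p s \<Longrightarrow> A p \<inter> A s = {}"
  using regular_step_levels regular_step_neq levels_disjoint by metis

lemma regular_step_not_le_back:
  "regular_step p s \<Longrightarrow> x \<in> A p \<Longrightarrow> y \<in> A s \<Longrightarrow> \<not> le y x"
  using level_reverse_eq regular_step_levels regular_step_sq_le regular_step_disjoint by blast

lemma regular_step_perfect_matching:
  assumes st: "regular_step p s"
  obtains f where "perfect_matching le (A p) (A s) f"
proof -
  have levels: "p \<in> {1..k}" "s \<in> {1..k}"
    using regular_step_levels[OF st] by auto
  obtain x where x: "x \<in> A p"
    using levels regular unfolding regular_poset_def by blast
  obtain y where y: "y \<in> A s" "le x y"
    using regular_step_sq_le[OF st] x unfolding sq_le_def down_set_def by blast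
  have "lt_of le x y"
    using regular_step_disjoint[OF st] x y unfolding lt_of_def by blast
  then show ?thesis
    using regular_step_regular_bip[OF st] x y that unfolding regular_bip_def by blast
qed

lemma node_regular_step:
  assumes "is_node P le A k N"
  shows "\<exists>p s. regular_step p s \<and> node_of le (A p) (A s) N"
proof -
  obtain t p s where t: "t \<in> {2..k}" and c: "consec P le A t p s"
    and N: "node_of le (A p) (A s) N"
    using assms unfolding is_node_def by blast
  have "regular_bip le (A p) (A s)"
    using regular t c unfolding regular_poset_def by blast
  moreover have "p \<in> {1..k}" "s \<in> {1..k}" "sq_lt P le (A p) (A s)"
    using c t unfolding consec_def by auto
  ultimately show ?thesis
    using N unfolding regular_step_def by blast
qed

definition lower :: "'a set \<times> 'a set \<Rightarrow> nat" where
  "lower N = fst (SOME ps. regular_step (fst ps) (snd ps) \<and> node_of le (A (fst ps)) (A (snd ps)) N)"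

definition upper :: "'a set \<times> 'a set \<Rightarrow> nat" where
  "upper N = snd (SOME ps. regular_step (fst ps) (snd ps) \<and> node_of le (A (fst ps)) (A (snd ps)) N)"

lemma node_lower_upper:
  assumes "is_node P le A k N"
  shows "regular_step (lower N) (upper N) \<and> node_of le (A (lower N)) (A (upper N)) N"
proof -
  have "\<exists>ps. regular_step (fst ps) (snd ps) \<and> node_of le (A (fst ps)) (A (snd ps)) N"
    using node_regular_step[OF assms] by auto
  from someI_ex[OF this] show ?thesis
    unfolding lower_def upper_def .
qed

lemma card_up_lower_less_of_split:
  assumes st: "regular_step p s" and N: "node_of le (A p) (A s) N" and T: "T \<subseteq> P"
    and v: "v \<in> up_set P le T" "v \<in> fst N" and x: "x \<in> fst N" "x \<notin> up_set P le T"
  shows "card (up_set P le T \<inter> A p) < card (up_set P le T \<inter> A s)"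
proof -
  let ?V = "up_set P le T \<inter> A p"
  have levels: "p \<in> {1..k}" "s \<in> {1..k}"
    using regular_step_levels[OF st] by auto
  obtain f where f: "perfect_matching le (A p) (A s) f"
    using regular_step_perfect_matching[OF st] by blast
  have sides: "fst N \<subseteq> A p"
    using N unfolding node_of_def by blast
  have "card ?V < card (up_set P le ?V \<inter> A s)"
  proof (rule regular_bip_card_up_set_inter_gt[OF level_finite regular_step_disjoint[OF st]
        level_subset regular_step_regular_bip[OF st] f])
    show "(bip_adj le (A p) (A s))\<^sup>*\<^sup>* v x"
      using node_connected[OF N] v x by blast
  qed (use levels v x sides in auto)
  also have "\<dots> \<le> card (up_set P le T \<inter> A s)"
    using up_set_up_set_subset[OF poset T] level_finite[of s] levels
    by (intro card_mono) auto
  finally show ?thesis .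
qed

lemma card_up_lower_less_of_upper_hit:
  assumes st: "regular_step p s" and N: "node_of le (A p) (A s) N" and T: "T \<subseteq> P"
    and b: "b \<in> T" "b \<in> snd N" and x: "x \<in> fst N" "x \<notin> up_set P le T"
  shows "card (up_set P le T \<inter> A p) < card (up_set P le T \<inter> A s)"
proof (cases "\<exists>v \<in> up_set P le T \<inter> A p. le v b")
  case True
  then obtain v where v: "v \<in> up_set P le T" "v \<in> A p" "le v b"
    by blast
  have sides: "fst N \<subseteq> A p" "snd N \<subseteq> A s"
    using N unfolding node_of_def by auto
  have "bip_adj le (A p) (A s) b v"
    using v b sides regular_step_disjoint[OF st] unfolding bip_adj_def lt_of_def by blast
  then have "v \<in> fst N"
    using node_closed[OF N] b sides v regular_step_disjoint[OF st] by blast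
  then show ?thesis
    using card_up_lower_less_of_split[OF st N T v(1) _ x] by blast
next
  case False
  let ?V = "up_set P le T \<inter> A p"
  have levels: "p \<in> {1..k}" "s \<in> {1..k}"
    using regular_step_levels[OF st] by auto
  have "b \<in> A s"
    using b N unfolding node_of_def by blast
  have "b \<notin> up_set P le ?V"
    using False unfolding up_set_def by blast
  have "card ?V \<le> card (up_set P le ?V \<inter> A s)"
    using card_le_card_up_level[OF levels regular_step_sq_le[OF st]] by blast
  also have "\<dots> < card (insert b (up_set P le ?V \<inter> A s))"
    using \<open>b \<notin> up_set P le ?V\<close> level_finite[of s] levels by simp
  also have "\<dots> \<le> card (up_set P le T \<inter> A s)"
    using up_set_up_set_subset[OF poset T] subset_up_set[OF poset T] b \<open>b \<in> A s\<close>
      level_finite[of s] levels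
    by (intro card_mono) auto
  finally show ?thesis .
qed

end

section \<open>Chains of active nodes\<close>

lemma clique_width_ge_1:
  assumes "1 \<le> w"
  shows "1 \<le> clique_width w"
proof -
  have "1 \<le> sqrt (real w)"
    using assms by (simp add: real_sqrt_ge_one)
  then show ?thesis
    unfolding clique_width_def by linarith
qed

lemma clique_width_le: "clique_width w \<le> w"
proof (cases "w = 0")
  case False
  then have "sqrt (real w) * 1 \<le> sqrt (real w) * sqrt (real w)"
    by (intro mult_left_mono) (simp_all add: real_sqrt_ge_one)
  then have "sqrt (real w) \<le> real w"
    by simp
  then show ?thesis
    unfolding clique_width_def by (simp add: ceiling_le_iff nat_le_iff)
qed (simp add: clique_width_def)

lemma dilworth_clique_sides:
  assumes clique: "dilworth_clique le N m C" and disj: "fst N \<inter> snd N = {}"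
  shows "C \<subseteq> fst N \<union> snd N" and "card (C \<inter> fst N) = m" and "card (C \<inter> snd N) = m"
    and "\<forall>x\<in>C \<inter> fst N. \<forall>y\<in>C \<inter> snd N. lt_of le x y"
proof -
  obtain xs ys f where C: "C = xs ` {..<m} \<union> ys ` {..<m}"
    and mem: "\<forall>i<m. xs i \<in> fst N \<and> ys i \<in> snd N"
    and lt: "\<forall>i<m. \<forall>j<m. lt_of le (xs i) (ys j)" and inj: "inj_on xs {..<m}"
    and f: "perfect_matching le (fst N) (snd N) f" and fxs: "\<forall>i<m. f (xs i) = ys i"
    using clique unfolding dilworth_clique_def by blast
  have lower: "C \<inter> fst N = xs ` {..<m}" and upper: "C \<inter> snd N = ys ` {..<m}"
    unfolding C using mem disj by auto
  have "inj_on f (fst N)"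
    using f unfolding perfect_matching_def bij_betw_def by blast
  then have "inj_on (f \<circ> xs) {..<m}"
    using inj mem by (auto intro: comp_inj_on inj_on_subset)
  moreover have "inj_on (f \<circ> xs) {..<m} = inj_on ys {..<m}"
    using fxs by (intro inj_on_cong) simp
  ultimately have "inj_on ys {..<m}"
    by simp
  then show "card (C \<inter> snd N) = m"
    unfolding upper by (simp add: card_image)
  show "card (C \<inter> fst N) = m"
    unfolding lower using inj by (simp add: card_image)
  show "C \<subseteq> fst N \<union> snd N"
    unfolding C using mem by blast
  show "\<forall>x\<in>C \<inter> fst N. \<forall>y\<in>C \<inter> snd N. lt_of le x y"
    unfolding lower upper using lt by blast
qed

lemma edges_ofD:
  "e \<in> edges_of le F \<Longrightarrow> \<exists>N\<in>F. fst e \<in> fst N \<and> snd e \<in> snd N \<and> lt_of le (fst e) (snd e)"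
  by (cases e) (auto simp: edges_of_def)

locale active_chain = reg_poset +
  fixes R :: "'a set \<times> 'a set \<Rightarrow> 'a set" and L :: "('a set \<times> 'a set) set" and us :: "nat \<times> enat"
  assumes cliques: "\<forall>N. active P le A k N \<longrightarrow> dilworth_clique le N (clique_width w) (R N)"
    and chain: "chain_of (active_class P le A k us) (class_less le R) L"
begin

lemma chain_active: "N \<in> L \<Longrightarrow> active P le A k N"
  using chain unfolding chain_of_def active_class_def by blast

lemma chain_comparable:
  "N \<in> L \<Longrightarrow> K \<in> L \<Longrightarrow> N \<noteq> K \<Longrightarrow> class_less le R N K \<or> class_less le R K N"
  using chain unfolding chain_of_def by blast

lemma chain_node:
  "N \<in> L \<Longrightarrow> regular_step (lower N) (upper N) \<and> node_of le (A (lower N)) (A (upper N)) N"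
  using chain_active node_lower_upper unfolding active_def by blast

lemma chain_levels: "N \<in> L \<Longrightarrow> lower N \<in> {1..k} \<and> upper N \<in> {1..k}"
  using chain_node regular_step_levels by blast

lemma chain_sides: "N \<in> L \<Longrightarrow> fst N \<subseteq> A (lower N) \<and> snd N \<subseteq> A (upper N)"
  using chain_node unfolding node_of_def by blast

lemma chain_sides_subset_P: "N \<in> L \<Longrightarrow> fst N \<subseteq> P \<and> snd N \<subseteq> P"
  using chain_sides chain_levels level_subset by blast

lemma chain_not_le_back: "N \<in> L \<Longrightarrow> x \<in> fst N \<Longrightarrow> y \<in> snd N \<Longrightarrow> \<not> le y x"
  using chain_node chain_sides regular_step_not_le_back by blast

lemma chain_sides_disjoint: "N \<in> L \<Longrightarrow> fst N \<inter> snd N = {}"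
  using chain_sides chain_node regular_step_disjoint by blast

lemma finite_chain: "finite L"
proof (rule finite_subset)
  show "L \<subseteq> Pow P \<times> Pow P"
    using chain_sides_subset_P by force
qed (use finite_P in simp)

lemma clique_sides:
  assumes "N \<in> L"
  shows "R N \<subseteq> fst N \<union> snd N" and "card (R N \<inter> fst N) = clique_width w"
    and "card (R N \<inter> snd N) = clique_width w"
    and "\<forall>x\<in>R N \<inter> fst N. \<forall>y\<in>R N \<inter> snd N. lt_of le x y"
proof -
  have "dilworth_clique le N (clique_width w) (R N)"
    using cliques chain_active[OF assms] by blast
  from dilworth_clique_sides[OF this chain_sides_disjoint[OF assms]]
  show "R N \<subseteq> fst N \<union> snd N" and "card (R N \<inter> fst N) = clique_width w"
    and "card (R N \<inter> snd N) = clique_width w"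
    and "\<forall>x\<in>R N \<inter> fst N. \<forall>y\<in>R N \<inter> snd N. lt_of le x y"
    by simp_all
qed

lemma clique_sides_nonempty: "N \<in> L \<Longrightarrow> R N \<inter> fst N \<noteq> {} \<and> R N \<inter> snd N \<noteq> {}"
  using clique_sides(2,3) clique_width_ge_1[OF width_pos] by (metis card.empty not_one_le_zero)

lemma clique_maximal_in_upper:
  assumes "N \<in> L" and "y \<in> R N" and "\<not> (\<exists>z\<in>R N. lt_of le y z)"
  shows "y \<in> snd N"
proof (rule ccontr)
  assume "y \<notin> snd N"
  then have "y \<in> R N \<inter> fst N"
    using clique_sides(1)[OF assms(1)] assms(2) by blast
  moreover obtain z where "z \<in> R N \<inter> snd N"
    using clique_sides_nonempty[OF assms(1)] by blast
  ultimately show False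
    using clique_sides(4)[OF assms(1)] assms(3) by blast
qed

lemma clique_minimal_in_lower:
  assumes "N \<in> L" and "y \<in> R N" and "\<not> (\<exists>z\<in>R N. lt_of le z y)"
  shows "y \<in> fst N"
proof (rule ccontr)
  assume "y \<notin> fst N"
  then have "y \<in> R N \<inter> snd N"
    using clique_sides(1)[OF assms(1)] assms(2) by blast
  moreover obtain z where "z \<in> R N \<inter> fst N"
    using clique_sides_nonempty[OF assms(1)] by blast
  ultimately show False
    using clique_sides(4)[OF assms(1)] assms(3) by blast
qed

lemma class_less_link:
  assumes "N \<in> L" and "K \<in> L" and "class_less le R N K"
  obtains y x where "y \<in> R N \<inter> snd N" and "x \<in> R K \<inter> fst K" and "le y x"
  using assms clique_maximal_in_upper[OF assms(1)] clique_minimal_in_lower[OF assms(2)]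
  unfolding class_less_def by blast

lemma class_less_levels:
  assumes N: "N \<in> L" and K: "K \<in> L" and NK: "class_less le R N K"
  shows "sq_le P le (A (upper N)) (A (lower K))"
proof (rule ccontr)
  assume not_le: "\<not> ?thesis"
  obtain y x where y: "y \<in> snd N" and x: "x \<in> fst K" and yx: "le y x"
    using class_less_link[OF N K NK] by blast
  have levels: "upper N \<in> {1..k}" "lower K \<in> {1..k}"
    using chain_levels N K by auto
  have "sq_le P le (A (lower K)) (A (upper N))"
    using levels_linear[OF levels] not_le by blast
  moreover have "x \<in> A (lower K)" "y \<in> A (upper N)"
    using x y chain_sides[OF K] chain_sides[OF N] by blast+
  ultimately have "x = y"
    using level_reverse_eq[OF levels(2,1)] yx by blast
  then have "upper N = lower K"
    using levels levels_disjoint \<open>x \<in> A (lower K)\<close> \<open>y \<in> A (upper N)\<close> by blast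
  then show False
    using not_le sq_le_refl level_subset levels by metis
qed

definition rank :: "'a set \<times> 'a set \<Rightarrow> nat" where
  "rank N = card {i \<in> {1..k}. sq_le P le (A i) (A (lower N))}"

lemma rank_less:
  assumes N: "N \<in> L" and K: "K \<in> L" and NK: "class_less le R N K"
  shows "rank N < rank K"
proof -
  have levelsN: "lower N \<in> {1..k}" "upper N \<in> {1..k}" and levelK: "lower K \<in> {1..k}"
    using chain_levels N K by auto
  have step: "sq_le P le (A (lower N)) (A (upper N))"
    using chain_node[OF N] regular_step_sq_le by blast
  have NK': "sq_le P le (A (upper N)) (A (lower K))"
    using class_less_levels[OF N K NK] .
  have below: "sq_le P le (A (lower N)) (A (lower K))"
    using sq_le_trans[OF step NK'] level_subset[OF levelK] .
  have "{i \<in> {1..k}. sq_le P le (A i) (A (lower N))} \<subset> {i \<in> {1..k}. sq_le P le (A i) (A (lower K))}"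
  proof
    show "{i \<in> {1..k}. sq_le P le (A i) (A (lower N))} \<subseteq> {i \<in> {1..k}. sq_le P le (A i) (A (lower K))}"
      using sq_le_trans[OF _ below] level_subset[OF levelK] by blast
    have "\<not> sq_le P le (A (lower K)) (A (lower N))"
    proof
      assume "sq_le P le (A (lower K)) (A (lower N))"
      then have "sq_le P le (A (upper N)) (A (lower N))"
        using sq_le_trans[OF NK'] level_subset levelsN by blast
      then show False
        using levels_sq_le_antisym[OF levelsN step] chain_node[OF N] regular_step_neq by blast
    qed
    then show "{i \<in> {1..k}. sq_le P le (A i) (A (lower N))} \<noteq> {i \<in> {1..k}. sq_le P le (A i) (A (lower K))}"
      using levelK sq_le_refl level_subset by blast
  qed
  then show ?thesis
    unfolding rank_def by (simp add: psubset_card_mono)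
qed

lemma class_less_of_rank_less: "N \<in> L \<Longrightarrow> K \<in> L \<Longrightarrow> rank N < rank K \<Longrightarrow> class_less le R N K"
  using chain_comparable rank_less by (metis less_asym)

lemma rank_inj: "N \<in> L \<Longrightarrow> K \<in> L \<Longrightarrow> rank N = rank K \<Longrightarrow> N = K"
  using chain_comparable rank_less by (metis less_irrefl)

definition count_lower :: "'a set \<Rightarrow> 'a set \<times> 'a set \<Rightarrow> nat" where
  "count_lower T N = card (up_set P le T \<inter> A (lower N))"

definition count_upper :: "'a set \<Rightarrow> 'a set \<times> 'a set \<Rightarrow> nat" where
  "count_upper T N = card (up_set P le T \<inter> A (upper N))"

lemma count_upper_le_count_lower:
  assumes T: "T \<subseteq> P" and N: "N \<in> L" and K: "K \<in> L" and NK: "class_less le R N K"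
  shows "count_upper T N \<le> count_lower T K"
proof -
  have levels: "upper N \<in> {1..k}" "lower K \<in> {1..k}"
    using chain_levels N K by auto
  let ?S = "up_set P le T \<inter> A (upper N)"
  have "card ?S \<le> card (up_set P le ?S \<inter> A (lower K))"
    using card_le_card_up_level[OF levels class_less_levels[OF N K NK]] by blast
  also have "\<dots> \<le> card (up_set P le T \<inter> A (lower K))"
    using up_set_up_set_subset[OF poset T] level_finite levels by (intro card_mono) auto
  finally show ?thesis
    unfolding count_upper_def count_lower_def .
qed

text \<open>The lower counts of the nodes in \<open>H\<close> are pairwise distinct, because the upper count of a
  node bounds the lower count of every later node.\<close>
lemma card_growing_nodes_le:
  assumes T: "T \<subseteq> P" and H: "H \<subseteq> L"
    and grow: "\<And>N. N \<in> H \<Longrightarrow> count_lower T N < count_upper T N"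
    and bounds: "\<And>N. N \<in> H \<Longrightarrow> count_lower T N \<in> {\<beta>..<B}"
  shows "card H \<le> B - \<beta>"
proof -
  have "inj_on (count_lower T) H"
  proof (rule inj_onI, rule ccontr)
    fix N K assume N: "N \<in> H" and K: "K \<in> H" and eq: "count_lower T N = count_lower T K"
      and "N \<noteq> K"
    then consider "class_less le R N K" | "class_less le R K N"
      using chain_comparable H by blast
    then show False
    proof cases
      case 1
      then show False
        using count_upper_le_count_lower[OF T _ _ 1] grow[OF N] eq N K H by fastforce
    next
      case 2
      then show False
        using count_upper_le_count_lower[OF T _ _ 2] grow[OF K] eq N K H by fastforce
    qed
  qed
  then have "card H \<le> card {\<beta>..<B}"
    using bounds by (intro card_inj_on_le) auto
  then show ?thesis
    by simp
qed

section \<open>Width of the edge poset\<close>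

definition hosts :: "('a \<times> 'a) set \<Rightarrow> ('a set \<times> 'a set) set" where
  "hosts C = {N \<in> L. \<exists>e\<in>C. fst e \<in> fst N \<and> snd e \<in> snd N}"

lemma finite_hosts: "finite (hosts C)"
  unfolding hosts_def using finite_chain by simp

lemma edge_in_P: "e \<in> edges_of le L \<Longrightarrow> fst e \<in> P \<and> snd e \<in> P"
  using edges_ofD chain_sides_subset_P by blast

lemma finite_edges: "finite (edges_of le L)"
proof (rule finite_subset)
  show "edges_of le L \<subseteq> P \<times> P"
    using edge_in_P by force
qed (use finite_P in simp)

lemma edges_subset_hosts:
  assumes "C \<subseteq> edges_of le L"
  shows "C \<subseteq> (\<Union>N\<in>hosts C. fst N \<times> snd N)"
proof
  fix e assume e: "e \<in> C"
  then obtain N where "N \<in> L" "fst e \<in> fst N" "snd e \<in> snd N"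
    using edges_ofD assms by blast
  then show "e \<in> (\<Union>N\<in>hosts C. fst N \<times> snd N)"
    using e by (intro UN_I[of N]) (auto simp: hosts_def mem_Times_iff)
qed

lemma count_lower_less_width:
  assumes "N \<in> L" and "x \<in> fst N" and "x \<notin> up_set P le T"
  shows "count_lower T N < w"
proof -
  have level: "lower N \<in> {1..k}" and "x \<in> A (lower N)"
    using chain_levels chain_sides assms by blast+
  then have "up_set P le T \<inter> A (lower N) \<subset> A (lower N)"
    using assms(3) by blast
  then show ?thesis
    unfolding count_lower_def using level_finite[OF level] level_card[OF level]
    by (metis psubset_card_mono)
qed

lemma antichain_tail_not_above_heads:
  assumes E: "antichain_in (edges_of le L) (edge_le le) E" and e: "e \<in> E"
  shows "fst e \<notin> up_set P le (snd ` E)"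
proof
  assume "fst e \<in> up_set P le (snd ` E)"
  then obtain e' where e': "e' \<in> E" "le (snd e') (fst e)"
    unfolding up_set_def by blast
  then have "e' = e"
    using E e unfolding antichain_in_def edge_le_def by blast
  moreover obtain N where "N \<in> L" "fst e \<in> fst N" "snd e \<in> snd N"
    using edges_ofD E e unfolding antichain_in_def by blast
  ultimately show False
    using chain_not_le_back e' by blast
qed

text \<open>The up-set of the heads of \<open>E\<close> contains no tail of \<open>E\<close>, so it grows in every host.\<close>
lemma card_hosts_antichain_le:
  assumes E: "antichain_in (edges_of le L) (edge_le le) E"
  shows "card (hosts E) \<le> w"
proof -
  have T: "snd ` E \<subseteq> P"
    using E edge_in_P unfolding antichain_in_def by blast
  have "card (hosts E) \<le> w - 0"
  proof (rule card_growing_nodes_le[OF T])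
    fix N assume "N \<in> hosts E"
    then obtain e where N: "N \<in> L" and e: "e \<in> E" "fst e \<in> fst N" "snd e \<in> snd N"
      unfolding hosts_def by blast
    have tail: "fst e \<notin> up_set P le (snd ` E)"
      using antichain_tail_not_above_heads[OF E e(1)] .
    have node: "regular_step (lower N) (upper N)" "node_of le (A (lower N)) (A (upper N)) N"
      using chain_node[OF N] by auto
    show "count_lower (snd ` E) N < count_upper (snd ` E) N"
      unfolding count_lower_def count_upper_def
      by (rule card_up_lower_less_of_upper_hit[OF node T imageI[OF e(1)] e(3) e(2) tail])
    show "count_lower (snd ` E) N \<in> {0..<w}"
      using count_lower_less_width[OF N e(2) tail] by simp
  qed (simp add: hosts_def)
  then show ?thesis
    by simp
qed

lemma card_sides_le: "N \<in> L \<Longrightarrow> card (fst N \<times> snd N) \<le> w * w"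
proof -
  assume N: "N \<in> L"
  have levels: "lower N \<in> {1..k}" "upper N \<in> {1..k}"
    using chain_levels[OF N] by auto
  have "card (fst N) \<le> card (A (lower N))"
    by (rule card_mono[OF level_finite[OF levels(1)]]) (use chain_sides[OF N] in blast)
  moreover have "card (snd N) \<le> card (A (upper N))"
    by (rule card_mono[OF level_finite[OF levels(2)]]) (use chain_sides[OF N] in blast)
  ultimately show ?thesis
    using level_card levels by (simp add: card_cartesian_product mult_le_mono)
qed

lemma card_edge_antichain_le:
  assumes E: "antichain_in (edges_of le L) (edge_le le) E"
  shows "card E \<le> w ^ 3"
proof -
  have fin: "finite (\<Union>N\<in>hosts E. fst N \<times> snd N)"
  proof (intro finite_UN_I finite_hosts finite_cartesian_product)
    fix N assume "N \<in> hosts E"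
    then have "fst N \<subseteq> P" "snd N \<subseteq> P"
      using chain_sides_subset_P unfolding hosts_def by auto
    then show "finite (fst N)" "finite (snd N)"
      using rev_finite_subset[OF finite_P] by auto
  qed
  have "E \<subseteq> (\<Union>N\<in>hosts E. fst N \<times> snd N)"
    using E edges_subset_hosts unfolding antichain_in_def by blast
  then have "card E \<le> card (\<Union>N\<in>hosts E. fst N \<times> snd N)"
    using fin by (rule card_mono[rotated])
  also have "\<dots> \<le> (\<Sum>N\<in>hosts E. card (fst N \<times> snd N))"
    using card_UN_le[OF finite_hosts] .
  also have "\<dots> \<le> (\<Sum>N\<in>hosts E. w * w)"
    using card_sides_le unfolding hosts_def by (intro sum_mono) simp
  also have "\<dots> \<le> w * (w * w)"
    using card_hosts_antichain_le[OF E] by simp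
  finally show ?thesis
    by (simp add: power3_eq_cube)
qed

lemma width_edges_le: "width_of (edges_of le L) (edge_le le) \<le> w ^ 3"
  using width_of_le[OF finite_edges] card_edge_antichain_le by blast

section \<open>Incomparable chains in the edge poset\<close>

definition captured :: "'a set \<Rightarrow> 'a set \<times> 'a set \<Rightarrow> bool" where
  "captured T N \<longleftrightarrow> (\<exists>x\<in>R N \<inter> fst N. x \<in> up_set P le T)"

lemma card_edge_chain_le_card_hosts:
  assumes C: "C \<subseteq> edges_of le L"
    and chain_C: "\<forall>e\<in>C. \<forall>e'\<in>C. edge_le le e e' \<or> edge_le le e' e"
  shows "card C \<le> card (hosts C)"
proof -
  define host where "host e = (SOME N. N \<in> L \<and> fst e \<in> fst N \<and> snd e \<in> snd N)" for e
  have host: "host e \<in> L \<and> fst e \<in> fst (host e) \<and> snd e \<in> snd (host e)" if e: "e \<in> C" for e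
  proof -
    obtain N where "N \<in> L \<and> fst e \<in> fst N \<and> snd e \<in> snd N"
      using edges_ofD C e by blast
    then show ?thesis
      unfolding host_def by (rule someI)
  qed
  have "inj_on host C"
  proof (rule inj_onI, rule ccontr)
    fix e e' assume e: "e \<in> C" and e': "e' \<in> C" and eq: "host e = host e'" and "e \<noteq> e'"
    then have "le (snd e) (fst e') \<or> le (snd e') (fst e)"
      using chain_C unfolding edge_le_def by blast
    then show False
      using chain_not_le_back[of "host e" "fst e'" "snd e"] chain_not_le_back[of "host e" "fst e" "snd e'"]
        host[OF e] host[OF e'] eq by auto
  qed
  moreover have "host ` C \<subseteq> hosts C"
    using host unfolding hosts_def by blast
  ultimately show ?thesis
    using finite_hosts by (rule card_inj_on_le)
qed

lemma count_lower_add_clique_width_le: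
  assumes N: "N \<in> L" and uncaptured: "\<not> captured T N"
  shows "count_lower T N + clique_width w \<le> w"
proof -
  have level: "lower N \<in> {1..k}"
    using chain_levels[OF N] by blast
  let ?U = "up_set P le T \<inter> A (lower N)"
  have sub: "?U \<union> (R N \<inter> fst N) \<subseteq> A (lower N)"
    using chain_sides[OF N] by blast
  then have fin: "finite ?U" "finite (R N \<inter> fst N)"
    using level_finite[OF level] by (auto intro: rev_finite_subset)
  have "?U \<inter> (R N \<inter> fst N) = {}"
    using uncaptured unfolding captured_def by blast
  then have "card ?U + card (R N \<inter> fst N) = card (?U \<union> (R N \<inter> fst N))"
    using fin by (simp add: card_Un_disjoint)
  also have "\<dots> \<le> card (A (lower N))"
    using sub level_finite[OF level] by (rule card_mono[rotated])
  finally have "card ?U + card (R N \<inter> fst N) \<le> card (A (lower N))" .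
  then show ?thesis
    unfolding count_lower_def using clique_sides(2)[OF N] level_card[OF level] by simp
qed

lemma card_uncaptured_le:
  assumes T: "T \<subseteq> P"
  shows "card {N\<in>L. (\<exists>b\<in>T. b \<in> snd N) \<and> \<not> captured T N} \<le> w - clique_width w + 1"
proof -
  have "card {N\<in>L. (\<exists>b\<in>T. b \<in> snd N) \<and> \<not> captured T N} \<le> (w - clique_width w + 1) - 0"
  proof (rule card_growing_nodes_le[OF T])
    fix N assume "N \<in> {N\<in>L. (\<exists>b\<in>T. b \<in> snd N) \<and> \<not> captured T N}"
    then obtain b where N: "N \<in> L" and b: "b \<in> T" "b \<in> snd N" and uncaptured: "\<not> captured T N"
      by blast
    obtain x where x: "x \<in> R N \<inter> fst N"
      using clique_sides_nonempty[OF N] by blast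
    then have "x \<notin> up_set P le T"
      using uncaptured unfolding captured_def by blast
    moreover have node: "regular_step (lower N) (upper N)" "node_of le (A (lower N)) (A (upper N)) N"
      using chain_node[OF N] by auto
    ultimately show "count_lower T N < count_upper T N"
      unfolding count_lower_def count_upper_def
      using card_up_lower_less_of_upper_hit[OF node T b] x by blast
    show "count_lower T N \<in> {0..<w - clique_width w + 1}"
      using count_lower_add_clique_width_le[OF N uncaptured] by simp
  qed blast
  then show ?thesis
    by simp
qed

lemma captured_clique_upper_subset:
  assumes T: "T \<subseteq> P" and M: "M \<in> L" and captured: "captured T M"
  shows "R M \<inter> snd M \<subseteq> up_set P le T"
proof
  fix y assume y: "y \<in> R M \<inter> snd M"
  obtain x where x: "x \<in> R M \<inter> fst M" "x \<in> up_set P le T"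
    using captured unfolding captured_def by blast
  have "le x y"
    using clique_sides(4)[OF M] x y unfolding lt_of_def by blast
  moreover have "y \<in> P"
    using y chain_sides_subset_P[OF M] by blast
  ultimately show "y \<in> up_set P le T"
    using up_set_upward_closed[OF poset T x(2)] by blast
qed

lemma clique_width_le_count_upper:
  assumes T: "T \<subseteq> P" and M: "M \<in> L" and captured: "captured T M"
  shows "clique_width w \<le> count_upper T M"
proof -
  have level: "upper M \<in> {1..k}"
    using chain_levels[OF M] by blast
  have "R M \<inter> snd M \<subseteq> up_set P le T \<inter> A (upper M)"
    using captured_clique_upper_subset[OF T M captured] chain_sides[OF M] by blast
  then have "card (R M \<inter> snd M) \<le> count_upper T M"
    unfolding count_upper_def using level_finite[OF level] by (intro card_mono) auto
  then show ?thesis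
    using clique_sides(3)[OF M] by simp
qed

text \<open>The up-set contains the upper half of the clique of \<open>M\<close>, hence the lower half of the clique
  of every later node: it fills at least \<open>clique_width w\<close> places of the lower level there, and
  it splits the node if it misses a point of its lower side.\<close>
lemma card_later_split_le:
  assumes T: "T \<subseteq> P" and M: "M \<in> L" and captured: "captured T M"
    and S: "S \<inter> up_set P le T = {}"
  shows "card {N\<in>L. class_less le R M N \<and> (\<exists>a\<in>S. a \<in> fst N)} \<le> w - clique_width w"
proof (rule card_growing_nodes_le[OF T])
  fix N assume "N \<in> {N\<in>L. class_less le R M N \<and> (\<exists>a\<in>S. a \<in> fst N)}"
  then obtain a where N: "N \<in> L" and MN: "class_less le R M N" and a: "a \<in> S" "a \<in> fst N"
    by blast
  have outside: "a \<notin> up_set P le T"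
    using S a by blast
  obtain y x where y: "y \<in> R M \<inter> snd M" and x: "x \<in> R N \<inter> fst N" and yx: "le y x"
    using class_less_link[OF M N MN] by blast
  have "y \<in> up_set P le T"
    using captured_clique_upper_subset[OF T M captured] y by blast
  moreover have "x \<in> P"
    using x chain_sides_subset_P[OF N] by blast
  ultimately have "x \<in> up_set P le T"
    using up_set_upward_closed[OF poset T] yx by blast
  moreover have node: "regular_step (lower N) (upper N)" "node_of le (A (lower N)) (A (upper N)) N"
    using chain_node[OF N] by auto
  ultimately show "count_lower T N < count_upper T N"
    unfolding count_lower_def count_upper_def
    using card_up_lower_less_of_split[OF node T _ _ a(2) outside] x by blast
  show "count_lower T N \<in> {clique_width w..<w}"
    using clique_width_le_count_upper[OF T M captured] count_upper_le_count_lower[OF T M N MN]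
      count_lower_less_width[OF N a(2) outside] by simp
qed blast

lemma captured_host_exists:
  assumes C: "C \<subseteq> edges_of le L"
    and chain_C: "\<forall>e\<in>C. \<forall>e'\<in>C. edge_le le e e' \<or> edge_le le e' e"
    and large: "w - clique_width w + 1 < card C"
  obtains N where "N \<in> hosts C" and "captured (snd ` C) N"
proof (rule ccontr)
  assume "\<not> thesis"
  then have "hosts C \<subseteq> {N\<in>L. (\<exists>b\<in>snd ` C. b \<in> snd N) \<and> \<not> captured (snd ` C) N}"
    using that unfolding hosts_def by blast
  then have "card (hosts C) \<le> card {N\<in>L. (\<exists>b\<in>snd ` C. b \<in> snd N) \<and> \<not> captured (snd ` C) N}"
    using finite_chain by (intro card_mono) auto
  also have "\<dots> \<le> w - clique_width w + 1"
    using C edge_in_P by (intro card_uncaptured_le) blast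
  finally show False
    using card_edge_chain_le_card_hosts[OF C chain_C] large by linarith
qed

text \<open>Every captured host of \<open>C\<close> is \<open>M\<close> or comes after \<open>M\<close>; the up-set of the heads of \<open>C'\<close>
  captures \<open>M\<close> and contains no tail of \<open>C\<close>.\<close>
lemma card_edge_chain_le:
  assumes C: "C \<subseteq> edges_of le L"
    and chain_C: "\<forall>e\<in>C. \<forall>e'\<in>C. edge_le le e e' \<or> edge_le le e' e"
    and C': "C' \<subseteq> edges_of le L" and cross: "\<forall>e\<in>C. \<forall>f\<in>C'. \<not> le (snd f) (fst e)"
    and M: "M \<in> L" and captured: "captured (snd ` C') M"
    and least: "\<And>N. N \<in> hosts C \<Longrightarrow> captured (snd ` C) N \<Longrightarrow> rank M \<le> rank N"
  shows "card C \<le> 2 * (w - clique_width w) + 2"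
proof -
  let ?Unc = "{N\<in>L. (\<exists>b\<in>snd ` C. b \<in> snd N) \<and> \<not> captured (snd ` C) N}"
  let ?Later = "{N\<in>L. class_less le R M N \<and> (\<exists>a\<in>fst ` C. a \<in> fst N)}"
  have T: "snd ` C \<subseteq> P" and T': "snd ` C' \<subseteq> P"
    using C C' edge_in_P by blast+
  have tails: "fst ` C \<inter> up_set P le (snd ` C') = {}"
    using cross unfolding up_set_def by blast
  have "hosts C \<subseteq> ?Unc \<union> insert M ?Later"
  proof
    fix N assume "N \<in> hosts C"
    then obtain e where N: "N \<in> L" and e: "e \<in> C" "fst e \<in> fst N" "snd e \<in> snd N"
      unfolding hosts_def by blast
    show "N \<in> ?Unc \<union> insert M ?Later"
    proof (cases "captured (snd ` C) N")
      case True
      then have "rank M \<le> rank N"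
        using least \<open>N \<in> hosts C\<close> by blast
      then have "M = N \<or> class_less le R M N"
        using rank_inj[OF M N] class_less_of_rank_less[OF M N] by linarith
      then show ?thesis
        using N e by blast
    qed (use N e in blast)
  qed
  then have "card (hosts C) \<le> card (?Unc \<union> insert M ?Later)"
    using finite_chain by (intro card_mono) auto
  also have "\<dots> \<le> card ?Unc + card (insert M ?Later)"
    by (rule card_Un_le)
  also have "\<dots> \<le> card ?Unc + (card ?Later + 1)"
    using finite_chain by (simp add: card_insert_if)
  also have "\<dots> \<le> (w - clique_width w + 1) + ((w - clique_width w) + 1)"
    using card_uncaptured_le[OF T] card_later_split_le[OF T' M captured tails] by linarith
  finally show ?thesis
    using card_edge_chain_le_card_hosts[OF C chain_C] by linarith
qed

lemma incomparable_edge_chains_small: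
  assumes C1: "C1 \<subseteq> edges_of le L" and C2: "C2 \<subseteq> edges_of le L"
    and chain1: "\<forall>e\<in>C1. \<forall>e'\<in>C1. edge_le le e e' \<or> edge_le le e' e"
    and chain2: "\<forall>e\<in>C2. \<forall>e'\<in>C2. edge_le le e e' \<or> edge_le le e' e"
    and incomparable: "\<forall>e\<in>C1. \<forall>f\<in>C2. \<not> edge_le le e f \<and> \<not> edge_le le f e"
  shows "card C1 \<le> 2 * (w - clique_width w) + 2 \<or> card C2 \<le> 2 * (w - clique_width w) + 2"
proof (rule ccontr)
  let ?S = "{N. (N \<in> hosts C1 \<and> captured (snd ` C1) N) \<or> (N \<in> hosts C2 \<and> captured (snd ` C2) N)}"
  assume large: "\<not> ?thesis"
  have cross12: "\<forall>e\<in>C1. \<forall>f\<in>C2. \<not> le (snd f) (fst e)"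
    and cross21: "\<forall>e\<in>C2. \<forall>f\<in>C1. \<not> le (snd f) (fst e)"
    using incomparable unfolding edge_le_def by auto
  obtain N0 where "N0 \<in> hosts C1" "captured (snd ` C1) N0"
    using captured_host_exists[OF C1 chain1] large by force
  then obtain M where M: "M \<in> ?S" and least: "\<And>N. N \<in> ?S \<Longrightarrow> rank M \<le> rank N"
    using ex_has_least_nat[of "\<lambda>N. N \<in> ?S" N0 rank] by blast
  have "M \<in> L"
    using M unfolding hosts_def by blast
  from M consider "captured (snd ` C1) M" | "captured (snd ` C2) M"
    by blast
  then show False
  proof cases
    case 1
    have "card C2 \<le> 2 * (w - clique_width w) + 2"
      using card_edge_chain_le[OF C2 chain2 C1 cross21 \<open>M \<in> L\<close> 1] least by blast
    then show False
      using large by simp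
  next
    case 2
    have "card C1 \<le> 2 * (w - clique_width w) + 2"
      using card_edge_chain_le[OF C1 chain1 C2 cross12 \<open>M \<in> L\<close> 2] least by blast
    then show False
      using large by simp
  qed
qed

lemma edges_mm_free: "mm_free (edges_of le L) (edge_le le) (2 * w + 3 - 2 * clique_width w)"
  unfolding mm_free_def
proof (intro notI, elim exE conjE)
  fix C1 C2
  assume C: "C1 \<subseteq> edges_of le L" "C2 \<subseteq> edges_of le L" and "finite C1" "finite C2"
    and card: "card C1 = 2 * w + 3 - 2 * clique_width w" "card C2 = 2 * w + 3 - 2 * clique_width w"
    and "C1 \<inter> C2 = {}"
    and chains: "\<forall>x\<in>C1. \<forall>y\<in>C1. edge_le le x y \<or> edge_le le y x"
      "\<forall>x\<in>C2. \<forall>y\<in>C2. edge_le le x y \<or> edge_le le y x"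
    and incomparable: "\<forall>x\<in>C1. \<forall>y\<in>C2. \<not> edge_le le x y \<and> \<not> edge_le le y x"
  show False
    using incomparable_edge_chains_small[OF C chains incomparable] card clique_width_le[of w]
    by linarith
qed

end

theorem lemma14:
  fixes P :: "'a set" and le :: "'a \<Rightarrow> 'a \<Rightarrow> bool" and A :: "nat \<Rightarrow> 'a set" and k w :: nat
    and us :: "nat \<times> enat" and R :: "'a set \<times> 'a set \<Rightarrow> 'a set" and L :: "('a set \<times> 'a set) set"
  assumes reg: "regular_poset P le A k"
    and w: "w = width_of P le"
    and R: "\<forall>N. active P le A k N \<longrightarrow> dilworth_clique le N (clique_width w) (R N)"
    and L: "chain_of (active_class P le A k us) (class_less le R) L"
  shows "width_of (edges_of le L) (edge_le le) \<le> w ^ 3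
       \<and> mm_free (edges_of le L) (edge_le le) (2 * w + 3 - 2 * clique_width w)"
proof -
  interpret active_chain P le A k w R L us
    by unfold_locales (fact reg w R L)+
  show ?thesis
    using width_edges_le edges_mm_free by blast
qed

end
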